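(* Let $d=1$, $\hbar>0$, $M>0$, $x,x_0\in\mathbb{R}$, $t_0<t$, and let $m$ be a positive Borel measure on $\mathbb{R}$ with $\int_{\mathbb{R}}e^{C|\alpha|}dm(\alpha)<\infty$ for all $C>0$ and $m(\mathbb{R}\setminus\{0\})>0$. Then the power series in $g$ \[ \sum_{n=0}^\infty\frac1{n!}\Bigl(\frac{-ig(t-t_0)}{\hbar}\Bigr)^n\int_{[0,1]^n}\int_{\mathbb{R}^n}\exp\Bigl\{-\frac{\hbar}{2M}(t-t_0)\sum_{j,k=1}^n\alpha_j\alpha_k(\sigma_j\sigma_k-\sigma_j\wedge\sigma_k)\Bigr\}\exp\Bigl\{\sum_{j=1}^n\alpha_j\bigl[\sigma_jx+(1-\sigma_j)x_0\bigr]\Bigr\}\prod_{j=1}^ndm(\alpha_j)\,d^n\sigma \] diverges for every $g\neq0$.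
   Context: $\sigma_j\wedge\sigma_k=\min(\sigma_j,\sigma_k)$. This series is the formal perturbation series (normalized by the free kernel) obtained from the Schr\"odinger propagator with potential $gV(x)=g\int e^{\alpha x}dm(\alpha)$ by analytic continuation of the mass $M\mapsto iM$, formally solving the heat equation with potential $-igV$. *)

theory Defs
  imports "HOL-Analysis.Analysis"
begin

text \<open>The n-th coefficient (without the prefactor) of the perturbation series:
  integral over sigma in [0,1]^n (Lebesgue) and alpha in R^n (product of m).
  The integrand is a positive real, so it is integrated as a nonnegative
  (extended-real) integral; it may be infinite.  T stands for t - t0.\<close>
definition pert_coeff ::
  "real measure \<Rightarrow> real \<Rightarrow> real \<Rightarrow> real \<Rightarrow> real \<Rightarrow> real \<Rightarrow> nat \<Rightarrow> ennreal" where
  "pert_coeff m hbar M T x x0 n =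
     (\<integral>\<^sup>+ \<sigma>. (\<integral>\<^sup>+ \<alpha>.
         ennreal (exp (- (hbar / (2 * M)) * T *
                      (\<Sum>j<n. \<Sum>k<n. \<alpha> j * \<alpha> k * (\<sigma> j * \<sigma> k - min (\<sigma> j) (\<sigma> k))))
                 * exp (\<Sum>j<n. \<alpha> j * (\<sigma> j * x + (1 - \<sigma> j) * x0)))
       \<partial>(PiM {..<n} (\<lambda>_. m)))
       * indicator (PiE {..<n} (\<lambda>_. {0..1::real})) \<sigma>
     \<partial>(PiM {..<n} (\<lambda>_. lborel)))"

end

theory Submission imports Defs "HOL-Real_Asymp.Real_Asymp" begin

text \<open>Restrict the \<open>\<sigma>\<close>-integration to \<open>[1/4, 3/4]\<^sup>n\<close> and the \<open>\<alpha>\<close>-integration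
  to \<open>A\<^sup>n\<close>, where \<open>A = [a, b]\<close> or \<open>A = [-b, -a]\<close> (with \<open>a > 0\<close>) is a set of
  positive \<open>m\<close>-measure, which exists since \<open>m(\<real> - {0}) > 0\<close>. There all products
  \<open>\<alpha>\<^sub>j \<alpha>\<^sub>k\<close> are at least \<open>a\<^sup>2\<close>, while \<open>\<sigma>\<^sub>j \<sigma>\<^sub>k - \<sigma>\<^sub>j \<and> \<sigma>\<^sub>k \<le> -1/16\<close>, so the
  Gaussian factor is at least \<open>exp (\<kappa> n\<^sup>2)\<close> with \<open>\<kappa> > 0\<close>, and the linear factor
  at least \<open>exp (-\<beta> n)\<close>. Hence the \<open>n\<close>-th coefficient grows like
  \<open>exp (\<kappa> n\<^sup>2) q\<^sup>n\<close>, which beats \<open>n!\<close> and any geometric factor \<open>|g|\<^sup>n\<close>, so the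
  terms of the series do not even tend to zero.\<close>

lemma mult_sub_min_le:
  fixes u v c :: real
  assumes "0 \<le> c" "c \<le> u" "u \<le> 1 - c" "c \<le> v" "v \<le> 1 - c"
  shows "u * v - min u v \<le> - c\<^sup>2"
proof (cases "u \<le> v")
  case True
  have "c * c \<le> u * (1 - v)" using assms by (intro mult_mono) auto
  then show ?thesis using True by (simp add: power2_eq_square algebra_simps)
next
  case False
  have "c * c \<le> v * (1 - u)" using assms by (intro mult_mono) auto
  then show ?thesis using False by (simp add: power2_eq_square algebra_simps)
qed

lemma same_sign_mult_ge:
  fixes s a y z :: real
  assumes "\<bar>s\<bar> = 1" "0 \<le> a" "a \<le> s * y" "a \<le> s * z"
  shows "a\<^sup>2 \<le> y * z"
proof -
  have "s * s = 1" using assms(1) by (metis abs_mult_self_eq mult_1_right)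
  have "a\<^sup>2 \<le> (s * y) * (s * z)"
    unfolding power2_eq_square using assms by (intro mult_mono) auto
  also have "\<dots> = (s * s) * (y * z)" by (simp only: ac_simps)
  finally show ?thesis using \<open>s * s = 1\<close> by simp
qed

lemma abs_convex_comb_le:
  fixes u x y :: real
  assumes "0 \<le> u" "u \<le> 1"
  shows "\<bar>u * x + (1 - u) * y\<bar> \<le> \<bar>x\<bar> + \<bar>y\<bar>"
proof -
  have "\<bar>u * x + (1 - u) * y\<bar> \<le> u * \<bar>x\<bar> + (1 - u) * \<bar>y\<bar>"
    using assms abs_triangle_ineq[of "u * x" "(1 - u) * y"] by (simp add: abs_mult)
  also have "\<dots> \<le> \<bar>x\<bar> + \<bar>y\<bar>"
    using assms mult_left_le_one_le[of "\<bar>x\<bar>" u] mult_left_le_one_le[of "\<bar>y\<bar>" "1 - u"] by simp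
  finally show ?thesis .
qed

lemma quadratic_form_le:
  fixes \<alpha> \<sigma> :: "nat \<Rightarrow> real" and s a c :: real
  assumes "\<bar>s\<bar> = 1" "0 \<le> a" "0 \<le> c"
    and "\<And>j. j < n \<Longrightarrow> a \<le> s * \<alpha> j"
    and "\<And>j. j < n \<Longrightarrow> c \<le> \<sigma> j \<and> \<sigma> j \<le> 1 - c"
  shows "(\<Sum>j<n. \<Sum>k<n. \<alpha> j * \<alpha> k * (\<sigma> j * \<sigma> k - min (\<sigma> j) (\<sigma> k)))
           \<le> - (a * c)\<^sup>2 * (real n)\<^sup>2"
proof -
  have "\<alpha> j * \<alpha> k * (\<sigma> j * \<sigma> k - min (\<sigma> j) (\<sigma> k)) \<le> - (a * c)\<^sup>2" if "j < n" "k < n" for j k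
  proof -
    have \<alpha>: "a\<^sup>2 \<le> \<alpha> j * \<alpha> k" using same_sign_mult_ge assms that by blast
    have \<sigma>: "\<sigma> j * \<sigma> k - min (\<sigma> j) (\<sigma> k) \<le> - c\<^sup>2"
      using mult_sub_min_le assms that by blast
    have "\<sigma> j * \<sigma> k - min (\<sigma> j) (\<sigma> k) \<le> 0"
      using \<sigma> zero_le_power2[of c] by linarith
    then have "\<alpha> j * \<alpha> k * (\<sigma> j * \<sigma> k - min (\<sigma> j) (\<sigma> k)) \<le> a\<^sup>2 * (\<sigma> j * \<sigma> k - min (\<sigma> j) (\<sigma> k))"
      using \<alpha> by (rule mult_right_mono_neg[rotated])
    also have "\<dots> \<le> a\<^sup>2 * (- c\<^sup>2)" using \<sigma> by (intro mult_left_mono) auto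
    finally show ?thesis by (simp add: power_mult_distrib)
  qed
  then have "(\<Sum>j<n. \<Sum>k<n. \<alpha> j * \<alpha> k * (\<sigma> j * \<sigma> k - min (\<sigma> j) (\<sigma> k)))
               \<le> (\<Sum>j<n. \<Sum>k<n. - (a * c)\<^sup>2)"
    by (intro sum_mono) auto
  then show ?thesis by (simp add: power2_eq_square ac_simps)
qed

lemma linear_form_ge:
  fixes \<alpha> \<sigma> :: "nat \<Rightarrow> real" and b x y :: real
  assumes "\<And>j. j < n \<Longrightarrow> \<bar>\<alpha> j\<bar> \<le> b"
    and "\<And>j. j < n \<Longrightarrow> 0 \<le> \<sigma> j \<and> \<sigma> j \<le> 1"
  shows "- (b * (\<bar>x\<bar> + \<bar>y\<bar>) * real n) \<le> (\<Sum>j<n. \<alpha> j * (\<sigma> j * x + (1 - \<sigma> j) * y))"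
proof -
  have "- (b * (\<bar>x\<bar> + \<bar>y\<bar>)) \<le> \<alpha> j * (\<sigma> j * x + (1 - \<sigma> j) * y)" if "j < n" for j
  proof -
    have "\<bar>\<alpha> j * (\<sigma> j * x + (1 - \<sigma> j) * y)\<bar> \<le> b * (\<bar>x\<bar> + \<bar>y\<bar>)"
      unfolding abs_mult using assms that abs_convex_comb_le
      by (intro mult_mono) (auto intro: order_trans[OF abs_ge_zero])
    then show ?thesis by linarith
  qed
  then have "(\<Sum>j<n. - (b * (\<bar>x\<bar> + \<bar>y\<bar>))) \<le> (\<Sum>j<n. \<alpha> j * (\<sigma> j * x + (1 - \<sigma> j) * y))"
    by (intro sum_mono) auto
  then show ?thesis by (simp add: ac_simps)
qed

definition pert_integrand ::
  "real \<Rightarrow> real \<Rightarrow> real \<Rightarrow> real \<Rightarrow> real \<Rightarrow> nat \<Rightarrow> (nat \<Rightarrow> real) \<Rightarrow> (nat \<Rightarrow> real) \<Rightarrow> real" where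
  "pert_integrand hbar M T x x0 n \<sigma> \<alpha> =
     exp (- (hbar / (2 * M)) * T *
            (\<Sum>j<n. \<Sum>k<n. \<alpha> j * \<alpha> k * (\<sigma> j * \<sigma> k - min (\<sigma> j) (\<sigma> k))))
     * exp (\<Sum>j<n. \<alpha> j * (\<sigma> j * x + (1 - \<sigma> j) * x0))"

lemma pert_coeff_eq_integrand:
  "pert_coeff m hbar M T x x0 n =
     (\<integral>\<^sup>+ \<sigma>. (\<integral>\<^sup>+ \<alpha>. ennreal (pert_integrand hbar M T x x0 n \<sigma> \<alpha>) \<partial>(PiM {..<n} (\<lambda>_. m)))
              * indicator (PiE {..<n} (\<lambda>_. {0..1})) \<sigma>
      \<partial>(PiM {..<n} (\<lambda>_. lborel)))"
  unfolding pert_coeff_def pert_integrand_def ..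

lemma pert_integrand_ge:
  fixes s a b hbar M T x x0 :: real
  assumes "hbar > 0" "M > 0" "T > 0" "\<bar>s\<bar> = 1" "a > 0"
    and "\<sigma> \<in> PiE {..<n} (\<lambda>_. {1/4..3/4})"
    and "\<alpha> \<in> PiE {..<n} (\<lambda>_. {y. s * y \<in> {a..b}})"
  shows "exp (hbar / (2 * M) * T * (a / 4)\<^sup>2 * (real n)\<^sup>2 - b * (\<bar>x\<bar> + \<bar>x0\<bar>) * real n)
           \<le> pert_integrand hbar M T x x0 n \<sigma> \<alpha>"
proof -
  have \<sigma>: "1/4 \<le> \<sigma> j \<and> \<sigma> j \<le> 1 - 1/4" if "j < n" for j
    using PiE_mem[OF assms(6), of j] that by simp
  have \<alpha>: "a \<le> s * \<alpha> j \<and> s * \<alpha> j \<le> b" if "j < n" for j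
    using PiE_mem[OF assms(7), of j] that by simp
  have abs_\<alpha>: "\<bar>\<alpha> j\<bar> \<le> b" if "j < n" for j
    using \<alpha>[OF that] assms(4,5) by (simp add: abs_if split: if_splits)
  have \<sigma>_01: "0 \<le> \<sigma> j \<and> \<sigma> j \<le> 1" if "j < n" for j
    using \<sigma>[OF that] by linarith
  have lin: "- (b * (\<bar>x\<bar> + \<bar>x0\<bar>) * real n) \<le> (\<Sum>j<n. \<alpha> j * (\<sigma> j * x + (1 - \<sigma> j) * x0))"
    using linear_form_ge[OF abs_\<alpha> \<sigma>_01] .
  have "(\<Sum>j<n. \<Sum>k<n. \<alpha> j * \<alpha> k * (\<sigma> j * \<sigma> k - min (\<sigma> j) (\<sigma> k))) \<le> - (a / 4)\<^sup>2 * (real n)\<^sup>2"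
    using quadratic_form_le[of s a "1/4" n \<alpha> \<sigma>] assms(4,5) \<alpha> \<sigma> by simp
  then have quad: "hbar / (2 * M) * T * (a / 4)\<^sup>2 * (real n)\<^sup>2
      \<le> - (hbar / (2 * M)) * T * (\<Sum>j<n. \<Sum>k<n. \<alpha> j * \<alpha> k * (\<sigma> j * \<sigma> k - min (\<sigma> j) (\<sigma> k)))"
    using mult_left_mono[of _ _ "hbar / (2 * M) * T"] assms(1-3) by fastforce
  show ?thesis
    unfolding pert_integrand_def exp_add[symmetric] using lin quad by simp
qed

lemma nn_integral_ge_on_set:
  assumes "A \<in> sets M" "\<And>x. x \<in> A \<Longrightarrow> c \<le> f x"
  shows "c * emeasure M A \<le> (\<integral>\<^sup>+ x. f x \<partial>M)"
proof -
  have "c * emeasure M A = (\<integral>\<^sup>+ x. c * indicator A x \<partial>M)"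
    using assms(1) by (simp add: nn_integral_cmult_indicator)
  also have "\<dots> \<le> (\<integral>\<^sup>+ x. f x \<partial>M)"
    using assms(2) by (intro nn_integral_mono) (simp split: split_indicator)
  finally show ?thesis .
qed

lemma slab_sets_borel: "{y::real. s * y \<in> {a..b}} \<in> sets borel"
  unfolding atLeastAtMost_iff
  by (intro borel_closed closed_Collect_conj closed_Collect_le continuous_intros)

lemma pert_coeff_ge:
  fixes m :: "real measure" and s a b hbar M T x x0 :: real
  assumes "finite_measure m" "sets m = sets borel"
    and "hbar > 0" "M > 0" "T > 0" "\<bar>s\<bar> = 1" "a > 0"
  shows "ennreal (exp (hbar / (2 * M) * T * (a / 4)\<^sup>2 * (real n)\<^sup>2)
                   * (exp (- b * (\<bar>x\<bar> + \<bar>x0\<bar>)) * measure m {y. s * y \<in> {a..b}} / 2) ^ n)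
           \<le> pert_coeff m hbar M T x x0 n"
proof -
  interpret finite_measure m by fact
  interpret product_sigma_finite "\<lambda>_::nat. m" ..
  interpret lborel: product_sigma_finite "\<lambda>_::nat. lborel" by standard
  define A where "A = {y::real. s * y \<in> {a..b}}"
  define E where "E = exp (hbar / (2 * M) * T * (a / 4)\<^sup>2 * (real n)\<^sup>2 - b * (\<bar>x\<bar> + \<bar>x0\<bar>) * real n)"
  have "A \<in> sets m" unfolding A_def assms(2) by (rule slab_sets_borel)
  then have box_\<alpha>: "PiE {..<n} (\<lambda>_. A) \<in> sets (PiM {..<n} (\<lambda>_. m))"
      "emeasure (PiM {..<n} (\<lambda>_. m)) (PiE {..<n} (\<lambda>_. A)) = ennreal (measure m A ^ n)"
    by (auto simp: emeasure_PiM emeasure_eq_measure ennreal_power measure_nonneg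
             intro!: sets_PiM_I_finite)
  have box_\<sigma>: "PiE {..<n} (\<lambda>_. {1/4..3/4::real}) \<in> sets (PiM {..<n} (\<lambda>_. lborel))"
      "emeasure (PiM {..<n} (\<lambda>_. lborel)) (PiE {..<n} (\<lambda>_. {1/4..3/4::real})) = ennreal ((1/2) ^ n)"
    by (auto simp: lborel.emeasure_PiM simp flip: ennreal_power intro!: sets_PiM_I_finite)
  have "ennreal E * ennreal (measure m A ^ n)
          \<le> (\<integral>\<^sup>+ \<alpha>. ennreal (pert_integrand hbar M T x x0 n \<sigma> \<alpha>) \<partial>(PiM {..<n} (\<lambda>_. m)))"
    if "\<sigma> \<in> PiE {..<n} (\<lambda>_. {1/4..3/4})" for \<sigma>
    unfolding box_\<alpha>(2)[symmetric] E_def using box_\<alpha>(1) assms(3-7) that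
    by (intro nn_integral_ge_on_set ennreal_leI pert_integrand_ge) (auto simp: A_def)
  moreover have "PiE {..<n} (\<lambda>_. {1/4..3/4}) \<subseteq> PiE {..<n} (\<lambda>_. {0..1::real})"
    by (rule PiE_mono) auto
  ultimately have "ennreal E * ennreal (measure m A ^ n) * ennreal ((1/2) ^ n) \<le> pert_coeff m hbar M T x x0 n"
    unfolding pert_coeff_eq_integrand box_\<sigma>(2)[symmetric]
    by (intro nn_integral_ge_on_set[OF box_\<sigma>(1)]) (auto split: split_indicator)
  moreover have "E = exp (hbar / (2 * M) * T * (a / 4)\<^sup>2 * (real n)\<^sup>2) * exp (- b * (\<bar>x\<bar> + \<bar>x0\<bar>)) ^ n"
    unfolding E_def exp_of_nat_mult[symmetric] exp_add[symmetric] by (simp add: algebra_simps)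
  ultimately show ?thesis
    by (simp add: A_def power_mult_distrib power_divide measure_nonneg mult.assoc flip: ennreal_mult)
qed

lemma finite_measure_if_exp_moment:
  fixes m :: "real measure" and C :: real
  assumes "(\<integral>\<^sup>+ \<alpha>. ennreal (exp (C * \<bar>\<alpha>\<bar>)) \<partial>m) < \<infinity>" "0 \<le> C"
  shows "finite_measure m"
proof
  have "emeasure m (space m) = (\<integral>\<^sup>+ \<alpha>. 1 \<partial>m)" by simp
  also have "\<dots> \<le> (\<integral>\<^sup>+ \<alpha>. ennreal (exp (C * \<bar>\<alpha>\<bar>)) \<partial>m)"
    using assms(2) by (intro nn_integral_mono) simp
  finally show "emeasure m (space m) \<noteq> \<infinity>" using assms(1) by (auto simp: top_unique)
qed

lemma ex_inverse_Suc_le_abs_le_Suc: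
  fixes y :: real
  assumes "y \<noteq> 0"
  shows "\<exists>k. 1 / real (Suc k) \<le> \<bar>y\<bar> \<and> \<bar>y\<bar> \<le> real (Suc k)"
proof -
  obtain k where k: "max \<bar>y\<bar> (1 / \<bar>y\<bar>) \<le> real k" using real_arch_simple by blast
  then have "1 \<le> real k * \<bar>y\<bar>" using assms by (simp add: divide_le_eq)
  then have "1 \<le> real (Suc k) * \<bar>y\<bar>" using abs_ge_zero[of y] by (simp add: distrib_right)
  then show ?thesis using k by (intro exI[of _ k]) (simp add: divide_le_eq mult.commute)
qed

lemma exists_slab_measure_pos:
  fixes m :: "real measure"
  assumes "sets m = sets borel" "emeasure m (UNIV - {0}) > 0"
  shows "\<exists>s a b. \<bar>s\<bar> = 1 \<and> 0 < a \<and> emeasure m {y. s * y \<in> {a..b}} > 0"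
proof (rule ccontr)
  assume "\<not> ?thesis"
  then have null: "AE y in m. y \<notin> {y. s * y \<in> {a..b}}" if "\<bar>s\<bar> = 1" "0 < a" for s a b
    using that by (intro AE_not_in null_setsI) (auto simp: assms(1) slab_sets_borel)
  have "AE y in m. \<bar>y\<bar> \<notin> {1 / real (Suc k)..real (Suc k)}" for k
  proof -
    have "AE y in m. y \<notin> {y. 1 * y \<in> {1 / real (Suc k)..real (Suc k)}}"
      and "AE y in m. y \<notin> {y. -1 * y \<in> {1 / real (Suc k)..real (Suc k)}}"
      by (intro null; simp)+
    then show ?thesis by eventually_elim (auto simp: abs_if)
  qed
  then have "AE y in m. \<forall>k. \<bar>y\<bar> \<notin> {1 / real (Suc k)..real (Suc k)}"
    by (simp add: AE_all_countable)
  then have "AE y in m. y = 0"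
    by eventually_elim (metis atLeastAtMost_iff ex_inverse_Suc_le_abs_le_Suc)
  moreover have "space m = UNIV" using sets_eq_imp_space_eq[OF assms(1)] by simp
  ultimately have "emeasure m (UNIV - {0}) = 0"
    by (subst (asm) AE_iff_measurable[of "UNIV - {0}"]) (auto simp: assms(1))
  with assms(2) show False by simp
qed

lemma exp_square_growth_not_summable:
  fixes c :: "nat \<Rightarrow> real" and z :: complex and \<kappa> q :: real
  assumes "\<kappa> > 0" "q > 0" "z \<noteq> 0" and growth: "\<And>n. exp (\<kappa> * (real n)\<^sup>2) * q ^ n \<le> c n"
  shows "\<not> summable (\<lambda>n. (1 / fact n) * z ^ n * complex_of_real (c n))"
proof
  let ?f = "\<lambda>n. (1 / fact n) * z ^ n * complex_of_real (c n)"
  assume "summable ?f"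
  then have "(\<lambda>n. norm (?f n)) \<longlonglongrightarrow> 0"
    by (intro tendsto_norm_zero summable_LIMSEQ_zero)
  then have "eventually (\<lambda>n. norm (?f n) < 1) sequentially"
    by (rule order_tendstoD(2)) simp
  moreover have "eventually (\<lambda>n. real n \<le> exp (\<kappa> * real n) * (q * norm z)) sequentially"
    using assms by real_asymp
  then have "eventually (\<lambda>n. 1 \<le> norm (?f n)) sequentially"
  proof eventually_elim
    case (elim n)
    have "fact n \<le> real n ^ n" using fact_le_power[of n] by simp
    also have "\<dots> \<le> (exp (\<kappa> * real n) * (q * norm z)) ^ n" by (rule power_mono[OF elim]) simp
    also have "\<dots> = exp (\<kappa> * (real n)\<^sup>2) * q ^ n * norm z ^ n"
      by (simp add: power_mult_distrib power2_eq_square exp_of_nat_mult[symmetric] ac_simps)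
    also have "\<dots> \<le> c n * norm z ^ n" using growth by (simp add: mult_right_mono)
    finally have "1 \<le> c n * norm z ^ n / fact n" by simp
    also have "\<dots> = norm (?f n)"
      using order_trans[OF _ growth, of 0 n] assms(2) by (simp add: norm_mult norm_power norm_divide)
    finally show ?case .
  qed
  ultimately have "eventually (\<lambda>n. False) sequentially" by eventually_elim simp
  then show False by simp
qed

theorem mainTheorem4:
  fixes m :: "real measure" and hbar M t t0 x x0 g :: real
  assumes "hbar > 0" and "M > 0" and "t0 < t"
    and "sets m = sets borel"
    and "\<forall>C>0. (\<integral>\<^sup>+ \<alpha>. ennreal (exp (C * \<bar>\<alpha>\<bar>)) \<partial>m) < \<infinity>"
    and "emeasure m (UNIV - {0}) > 0"
    and "g \<noteq> 0"
  shows "\<not> ((\<forall>n. pert_coeff m hbar M (t - t0) x x0 n < \<infinity>) \<and>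
            summable (\<lambda>n. (1 / fact n) * ((- \<i> * complex_of_real g * complex_of_real (t - t0)) / complex_of_real hbar) ^ n
                           * complex_of_real (enn2real (pert_coeff m hbar M (t - t0) x x0 n))))"
proof -
  define z where "z = (- \<i> * complex_of_real g * complex_of_real (t - t0)) / complex_of_real hbar"
  define c where "c n = enn2real (pert_coeff m hbar M (t - t0) x x0 n)" for n
  have "finite_measure m"
    by (rule finite_measure_if_exp_moment[of m 1]) (use assms(5)[rule_format, of 1] in simp_all)
  then interpret finite_measure m .
  obtain s a b where s: "\<bar>s\<bar> = 1" "0 < a" and pos: "emeasure m {y. s * y \<in> {a..b}} > 0"
    using exists_slab_measure_pos assms(4,6) by blast
  define \<kappa> where "\<kappa> = hbar / (2 * M) * (t - t0) * (a / 4)\<^sup>2"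
  define q where "q = exp (- b * (\<bar>x\<bar> + \<bar>x0\<bar>)) * measure m {y. s * y \<in> {a..b}} / 2"
  have "\<kappa> > 0" using assms(1-3) s by (simp add: \<kappa>_def)
  moreover have "q > 0" using pos by (simp add: q_def emeasure_eq_measure)
  moreover have "z \<noteq> 0" using assms(1,3,7) by (simp add: z_def)
  moreover have "exp (\<kappa> * (real n)\<^sup>2) * q ^ n \<le> c n"
    if "pert_coeff m hbar M (t - t0) x x0 n < \<infinity>" for n
  proof -
    have "ennreal (exp (\<kappa> * (real n)\<^sup>2) * q ^ n) \<le> pert_coeff m hbar M (t - t0) x x0 n"
      unfolding \<kappa>_def q_def
      by (rule pert_coeff_ge) (use \<open>finite_measure m\<close> assms(1-4) s in auto)
    from enn2real_mono[OF this] show ?thesis using that \<open>q > 0\<close> by (simp add: c_def)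
  qed
  ultimately show ?thesis
    unfolding z_def[symmetric] c_def[symmetric] using exp_square_growth_not_summable by blast
qed

end
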